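(* Let $X$ be a finite group with a normal subgroup $N$ and a complement $G$ to $N$ in $X$ (so $X=N{:}G$), and let $Y\leq X$ be core-free such that the transitive permutation group $X$ acting on the right cosets of $Y$ is elusive. Identify $G$ with $X/N$ via the quotient map, and let $H$ be the subgroup of $G$ corresponding to $YN/N$. Suppose $H$ is core-free in $G$. Then $G$, acting transitively on the right cosets of $H$, is elusive.
   Context: A derangement is a permutation with no fixed points. A transitive permutation group is elusive if it contains no derangements of prime order. *)

theory Defs
  imports "HOL-Algebra.Algebra" "HOL-Computational_Algebra.Primes"
begin

definition core :: "('a, 'b) monoid_scheme \<Rightarrow> 'a set \<Rightarrow> 'a set" where
  "core G H = (\<Inter>g\<in>carrier G. (g <#\<^bsub>G\<^esub> H) #>\<^bsub>G\<^esub> inv\<^bsub>G\<^esub> g)"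

definition core_free :: "('a, 'b) monoid_scheme \<Rightarrow> 'a set \<Rightarrow> bool" where
  "core_free G H \<longleftrightarrow> core G H = {\<one>\<^bsub>G\<^esub>}"

definition coset_perm :: "('a, 'b) monoid_scheme \<Rightarrow> 'a set \<Rightarrow> 'a \<Rightarrow> 'a set \<Rightarrow> 'a set" where
  "coset_perm G H x = (\<lambda>C \<in> rcosets\<^bsub>G\<^esub> H. C #>\<^bsub>G\<^esub> x)"

definition coset_perm_group :: "('a, 'b) monoid_scheme \<Rightarrow> 'a set \<Rightarrow> ('a set \<Rightarrow> 'a set) set" where
  "coset_perm_group G H = coset_perm G H ` carrier G"

definition derangement :: "'c set \<Rightarrow> ('c \<Rightarrow> 'c) \<Rightarrow> bool" where
  "derangement S \<sigma> \<longleftrightarrow> (\<forall>x\<in>S. \<sigma> x \<noteq> x)"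

definition elusive_coset_action :: "('a, 'b) monoid_scheme \<Rightarrow> 'a set \<Rightarrow> bool" where
  "elusive_coset_action G H \<longleftrightarrow>
     (\<forall>\<sigma>\<in>coset_perm_group G H.
        Factorial_Ring.prime (group.ord (BijGroup (rcosets\<^bsub>G\<^esub> H)) \<sigma>) \<longrightarrow>
        \<not> derangement (rcosets\<^bsub>G\<^esub> H) \<sigma>)"

end

(* Let g in G act as a derangement of prime order p on the right cosets of H = YN \<inter> G.
   Since H is core-free, g^p = 1. If g fixed a coset Yx of Y, then writing x = n c with
   n in N and c in G gives c g c^-1 = n^-1 (x g x^-1) n in YN \<inter> G = H, so g would fix the
   coset Hc. Hence g acts on the cosets of Y as a derangement of order p, contradicting the
   elusiveness of X. *)

theory Submission
  imports Defs "HOL-Algebra.Group_Action"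
begin

lemma (in group) rcosets_r_coset_closed:
  assumes "H \<subseteq> carrier G" "C \<in> rcosets H" "x \<in> carrier G"
  shows "C #> x \<in> rcosets H"
proof -
  obtain a where a: "a \<in> carrier G" "C = H #> a"
    using assms(2) unfolding RCOSETS_def by blast
  then have "C #> x = H #> (a \<otimes> x)"
    using assms(1,3) coset_mult_assoc by simp
  then show ?thesis
    using a assms(1,3) rcosetsI by simp
qed

lemma (in group) coset_perm_closed:
  assumes "subgroup H G" "x \<in> carrier G"
  shows "coset_perm G H x \<in> carrier (BijGroup (rcosets H))"
proof -
  have H: "H \<subseteq> carrier G"
    using assms(1) subgroup.subset by blast
  have cancel: "C #> y #> inv y = C" if "C \<in> rcosets H" "y \<in> carrier G" for C y
    using that subgroup.rcosets_carrier[OF assms(1) is_group] coset_mult_assoc by simp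
  have "bij_betw (\<lambda>C. C #> x) (rcosets H) (rcosets H)"
    by (rule bij_betwI[where g = "\<lambda>C. C #> inv x"])
      (use assms(2) H rcosets_r_coset_closed cancel[of _ x] cancel[of _ "inv x"] in auto)
  then show ?thesis
    unfolding BijGroup_def Bij_def coset_perm_def
    using bij_betw_restrict_eq by simp
qed

text \<open>The order is reversed: right multiplication is a right action, whereas \<open>BijGroup\<close>
  multiplies by composition of functions.\<close>

lemma (in group) coset_perm_mult:
  assumes "subgroup H G" "x \<in> carrier G" "y \<in> carrier G"
  shows "coset_perm G H (x \<otimes> y) = coset_perm G H y \<otimes>\<^bsub>BijGroup (rcosets H)\<^esub> coset_perm G H x"
proof -
  have "C #> (x \<otimes> y) = C #> x #> y" if "C \<in> rcosets H" for C
    using that subgroup.rcosets_carrier[OF assms(1) is_group] assms(2,3) coset_mult_assoc by simp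
  moreover have "C #> x \<in> rcosets H" if "C \<in> rcosets H" for C
    using that assms(1,2) subgroup.subset rcosets_r_coset_closed by blast
  ultimately show ?thesis
    using coset_perm_closed[OF assms(1)] assms(2,3)
    by (auto simp: BijGroup_def compose_def coset_perm_def intro!: restrict_ext)
qed

lemma (in group) coset_perm_one:
  assumes "subgroup H G"
  shows "coset_perm G H \<one> = \<one>\<^bsub>BijGroup (rcosets H)\<^esub>"
  using subgroup.rcosets_carrier[OF assms is_group]
  by (auto simp: BijGroup_def coset_perm_def intro!: restrict_ext)

lemma (in group) coset_perm_pow:
  assumes "subgroup H G" "x \<in> carrier G"
  shows "coset_perm G H (x [^] (n::nat)) = coset_perm G H x [^]\<^bsub>BijGroup (rcosets H)\<^esub> n"
proof (induction n)
  case 0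
  show ?case using coset_perm_one[OF assms(1)] by simp
next
  case (Suc n)
  have "coset_perm G H (x [^] Suc n) = coset_perm G H (x \<otimes> x [^] n)"
    using assms(2) nat_pow_Suc2 by simp
  also have "\<dots> = coset_perm G H x [^]\<^bsub>BijGroup (rcosets H)\<^esub> n \<otimes>\<^bsub>BijGroup (rcosets H)\<^esub> coset_perm G H x"
    using coset_perm_mult assms Suc by simp
  finally show ?case by simp
qed

lemma (in group) coset_perm_fixes_iff:
  assumes "subgroup H G" "a \<in> carrier G" "x \<in> carrier G"
  shows "coset_perm G H x (H #> a) = H #> a \<longleftrightarrow> a \<otimes> x \<otimes> inv a \<in> H"
proof -
  have H: "H \<subseteq> carrier G"
    using assms(1) subgroup.subset by blast
  have "coset_perm G H x (H #> a) = H #> (a \<otimes> x)"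
    using assms(2,3) H rcosetsI coset_mult_assoc by (simp add: coset_perm_def)
  also have "\<dots> = H #> a \<longleftrightarrow> a \<otimes> x \<in> H #> a"
    using assms repr_independence repr_independenceD by (metis m_closed)
  also have "\<dots> \<longleftrightarrow> a \<otimes> x \<otimes> inv a \<in> H"
    using assms subgroup.rcos_module[OF assms(1) is_group] by simp
  finally show ?thesis .
qed

lemma (in group) derangement_coset_perm_iff:
  assumes "subgroup H G" "x \<in> carrier G"
  shows "derangement (rcosets H) (coset_perm G H x) \<longleftrightarrow> (\<forall>a\<in>carrier G. a \<otimes> x \<otimes> inv a \<notin> H)"
  using assms coset_perm_fixes_iff subgroup.subset rcosetsI
  unfolding derangement_def RCOSETS_def by auto

lemma (in group) coset_perm_eq_one_imp_mem_core:
  assumes "subgroup H G" "x \<in> carrier G"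
    and "coset_perm G H x = \<one>\<^bsub>BijGroup (rcosets H)\<^esub>"
  shows "x \<in> core G H"
  unfolding core_def
proof
  fix c assume c: "c \<in> carrier G"
  have "H #> inv c \<in> rcosets H"
    using assms(1) c subgroup.subset rcosetsI by blast
  then have "coset_perm G H x (H #> inv c) = H #> inv c"
    using assms(3) by (simp add: BijGroup_def)
  then have "inv c \<otimes> x \<otimes> c \<in> H"
    using coset_perm_fixes_iff[OF assms(1) _ assms(2), of "inv c"] c by simp
  moreover have "x = c \<otimes> (inv c \<otimes> x \<otimes> c) \<otimes> inv c"
    using conjugation_is_surj[OF c assms(2)] by simp
  ultimately show "x \<in> (c <# H) #> inv c"
    unfolding l_coset_def r_coset_def by blast
qed

lemma (in group) core_free_coset_perm_eq_oneD:
  assumes "subgroup H G" "core_free G H" "x \<in> carrier G"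
    and "coset_perm G H x = \<one>\<^bsub>BijGroup (rcosets H)\<^esub>"
  shows "x = \<one>"
  using coset_perm_eq_one_imp_mem_core[OF assms(1,3,4)] assms(2) by (simp add: core_free_def)

lemma (in group) ord_eq_prime:
  assumes "x \<in> carrier G" "Factorial_Ring.prime p" "x [^] p = \<one>" "x \<noteq> \<one>"
  shows "ord x = p"
proof -
  have "ord x dvd p"
    using assms(1,3) pow_eq_id by blast
  then show ?thesis
    using assms ord_eq_1 by (auto simp: prime_nat_iff)
qed

lemma derangement_neq_one:
  assumes "derangement S \<sigma>" "C \<in> S"
  shows "\<sigma> \<noteq> \<one>\<^bsub>BijGroup S\<^esub>"
  using assms by (auto simp: derangement_def BijGroup_def)

text \<open>Core-freeness makes the action faithful, so a permutation of prime order p comes from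
  an element x with x^p = 1.\<close>

lemma (in group) elusive_coset_action_iff:
  assumes "subgroup H G" "core_free G H"
  shows "elusive_coset_action G H \<longleftrightarrow>
    (\<forall>x\<in>carrier G. \<forall>p::nat. Factorial_Ring.prime p \<longrightarrow> x [^] p = \<one> \<longrightarrow>
       \<not> derangement (rcosets H) (coset_perm G H x))"
    (is "_ \<longleftrightarrow> ?elements")
proof
  interpret Bij: group "BijGroup (rcosets H)"
    by (rule group_BijGroup)
  have H_coset: "H \<in> rcosets H"
    using subgroup.subgroup_in_rcosets[OF assms(1) is_group] .
  show "?elements" if elusive: "elusive_coset_action G H"
  proof (intro ballI allI impI notI)
    fix x and p :: nat
    assume x: "x \<in> carrier G" and p: "Factorial_Ring.prime p" "x [^] p = \<one>"
      and der: "derangement (rcosets H) (coset_perm G H x)"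
    have "coset_perm G H x [^]\<^bsub>BijGroup (rcosets H)\<^esub> p = \<one>\<^bsub>BijGroup (rcosets H)\<^esub>"
      using coset_perm_pow[OF assms(1) x, of p, symmetric] coset_perm_one[OF assms(1)] p(2) by simp
    then have "Bij.ord (coset_perm G H x) = p"
      using Bij.ord_eq_prime coset_perm_closed[OF assms(1) x] p(1) derangement_neq_one[OF der H_coset]
      by blast
    then show False
      using elusive der p(1) x unfolding elusive_coset_action_def coset_perm_group_def by blast
  qed
  show "elusive_coset_action G H" if "?elements"
    unfolding elusive_coset_action_def coset_perm_group_def
  proof (intro ballI impI notI)
    fix \<sigma>
    assume "\<sigma> \<in> coset_perm G H ` carrier G"
      and p: "Factorial_Ring.prime (Bij.ord \<sigma>)"
      and der: "derangement (rcosets H) \<sigma>"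
    then obtain x where x: "x \<in> carrier G" "\<sigma> = coset_perm G H x"
      by blast
    have "coset_perm G H (x [^] Bij.ord \<sigma>) = \<one>\<^bsub>BijGroup (rcosets H)\<^esub>"
      using coset_perm_pow[OF assms(1) x(1)] coset_perm_closed[OF assms(1) x(1)] x(2) by simp
    then have "x [^] Bij.ord \<sigma> = \<one>"
      using core_free_coset_perm_eq_oneD[OF assms] x(1) by simp
    then show False
      using \<open>?elements\<close> x p der by blast
  qed
qed

lemma (in group) subgroup_set_mult_normal_Int:
  assumes "N \<lhd> G" "subgroup Y G" "subgroup K G"
  shows "subgroup ((Y <#> N) \<inter> K) (G\<lparr>carrier := K\<rparr>)"
proof -
  have "subgroup (Y <#> N) G"
    using mult_norm_subgroup[OF assms(1,2)] commut_normal[OF assms(2,1)] by simp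
  then show ?thesis
    using subgroup_incl subgroups_Inter_pair assms(3) by blast
qed

lemma (in group) conj_mem_set_mult_normal:
  assumes "N \<lhd> G" "n \<in> N" "c \<in> carrier G" "g \<in> carrier G"
    and "(n \<otimes> c) \<otimes> g \<otimes> inv (n \<otimes> c) \<in> Y"
  shows "c \<otimes> g \<otimes> inv c \<in> Y <#> N"
proof -
  define y where "y = (n \<otimes> c) \<otimes> g \<otimes> inv (n \<otimes> c)"
  have N: "subgroup N G"
    using assms(1) normal_imp_subgroup by blast
  have n: "n \<in> carrier G"
    using subgroup.mem_carrier[OF N assms(2)] .
  have y: "y \<in> carrier G"
    using n assms(3,4) by (simp add: y_def)
  have "inv y \<otimes> inv n \<otimes> y \<in> N"
    using normal.inv_op_closed1[OF assms(1) y subgroup.m_inv_closed[OF N assms(2)]] .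
  then have "inv y \<otimes> inv n \<otimes> y \<otimes> n \<in> N"
    using subgroup.m_closed[OF N _ assms(2)] by blast
  moreover have "c \<otimes> g \<otimes> inv c = y \<otimes> (inv y \<otimes> inv n \<otimes> y \<otimes> n)"
  proof -
    have "y \<otimes> (inv y \<otimes> inv n \<otimes> y \<otimes> n) = inv n \<otimes> y \<otimes> n"
      using n y by (simp add: m_assoc[symmetric])
    also have "\<dots> = c \<otimes> g \<otimes> inv c"
      using n assms(3,4) unfolding y_def
      by (simp add: m_assoc[symmetric] inv_mult_group) (simp add: m_assoc)
    finally show ?thesis by simp
  qed
  moreover have "y \<in> Y"
    using assms(5) by (simp add: y_def)
  ultimately show ?thesis
    unfolding set_mult_def by blast
qed

lemma (in group) derangement_coset_perm_complement:
  assumes "N \<lhd> G" "subgroup K G" "N <#> K = carrier G" "subgroup Y G" "g \<in> K"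
    and "derangement (rcosets\<^bsub>G\<lparr>carrier := K\<rparr>\<^esub> ((Y <#> N) \<inter> K))
           (coset_perm (G\<lparr>carrier := K\<rparr>) ((Y <#> N) \<inter> K) g)"
  shows "derangement (rcosets Y) (coset_perm G Y g)"
proof -
  interpret K: group "G\<lparr>carrier := K\<rparr>"
    using assms(2) subgroup_imp_group by blast
  have g: "g \<in> carrier G"
    using subgroup.mem_carrier[OF assms(2,5)] .
  have no_fixed_coset_in_K: "c \<otimes> g \<otimes> inv c \<notin> (Y <#> N) \<inter> K" if "c \<in> K" for c
    using assms(6) K.derangement_coset_perm_iff[OF subgroup_set_mult_normal_Int[OF assms(1,4,2)]]
      assms(2,5) that by simp
  show ?thesis
    unfolding derangement_coset_perm_iff[OF assms(4) g]
  proof (intro ballI notI)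
    fix x assume x: "x \<in> carrier G" "x \<otimes> g \<otimes> inv x \<in> Y"
    obtain n c where nc: "n \<in> N" "c \<in> K" "x = n \<otimes> c"
      using x(1) assms(3) unfolding set_mult_def by blast
    then have "c \<otimes> g \<otimes> inv c \<in> Y <#> N"
      using conj_mem_set_mult_normal[OF assms(1) nc(1) subgroup.mem_carrier[OF assms(2) nc(2)] g]
        x(2) by simp
    moreover have "c \<otimes> g \<otimes> inv c \<in> K"
      using nc(2) assms(2,5) by (simp add: subgroup.m_closed subgroup.m_inv_closed)
    ultimately have "c \<otimes> g \<otimes> inv c \<in> (Y <#> N) \<inter> K"
      by blast
    then show False
      using no_fixed_coset_in_K \<open>c \<in> K\<close> by blast
  qed
qed

theorem lemma5p4:
  fixes XG :: "('a, 'b) monoid_scheme"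
    and N G Y :: "'a set"
  assumes "group XG"
    and "finite (carrier XG)"
    and "normal N XG"
    and "subgroup G XG"
    and "N \<inter> G = {\<one>\<^bsub>XG\<^esub>}"
    and "N <#>\<^bsub>XG\<^esub> G = carrier XG"
    and "subgroup Y XG"
    and "core_free XG Y"
    and "elusive_coset_action XG Y"
    and "core_free (XG\<lparr>carrier := G\<rparr>) ((Y <#>\<^bsub>XG\<^esub> N) \<inter> G)"
  shows "elusive_coset_action (XG\<lparr>carrier := G\<rparr>) ((Y <#>\<^bsub>XG\<^esub> N) \<inter> G)"
proof -
  interpret X: group XG by fact
  interpret G: group "XG\<lparr>carrier := G\<rparr>"
    using X.subgroup_imp_group assms(4) by blast
  have X_elements: "\<not> derangement (rcosets\<^bsub>XG\<^esub> Y) (coset_perm XG Y g)"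
    if "g \<in> carrier XG" "Factorial_Ring.prime p" "g [^]\<^bsub>XG\<^esub> p = \<one>\<^bsub>XG\<^esub>" for g and p :: nat
    using X.elusive_coset_action_iff[OF assms(7,8)] assms(9) that by blast
  show ?thesis
    unfolding G.elusive_coset_action_iff[OF X.subgroup_set_mult_normal_Int[OF assms(3,7,4)] assms(10)]
  proof (intro ballI allI impI notI)
    fix g and p :: nat
    assume "g \<in> carrier (XG\<lparr>carrier := G\<rparr>)" "Factorial_Ring.prime p"
      and "g [^]\<^bsub>XG\<lparr>carrier := G\<rparr>\<^esub> p = \<one>\<^bsub>XG\<lparr>carrier := G\<rparr>\<^esub>"
      and "derangement (rcosets\<^bsub>XG\<lparr>carrier := G\<rparr>\<^esub> ((Y <#>\<^bsub>XG\<^esub> N) \<inter> G))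
             (coset_perm (XG\<lparr>carrier := G\<rparr>) ((Y <#>\<^bsub>XG\<^esub> N) \<inter> G) g)"
    moreover have "g \<in> carrier XG"
      using \<open>g \<in> carrier (XG\<lparr>carrier := G\<rparr>)\<close> subgroup.mem_carrier[OF assms(4)] by simp
    moreover have "g [^]\<^bsub>XG\<^esub> p = \<one>\<^bsub>XG\<^esub>"
      using \<open>g [^]\<^bsub>XG\<lparr>carrier := G\<rparr>\<^esub> p = _\<close> X.nat_pow_consistent by simp
    ultimately show False
      using X.derangement_coset_perm_complement[OF assms(3,4,6,7)] X_elements by auto
  qed
qed

end
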